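(* Let $(N,+,* )$ be a planar nearring presented by $(\Phi,R,M)$, and let $d\in D(N)$ be nonzero and not a zero multiplier, written $d=r_d\phi_d$ with $r_d\in R\setminus M$, $\phi_d\in\Phi$. Then $\{\phi\in\Phi : r_d\phi\in D(N)\}$ is a subgroup of $\Phi$, and it contains $Z(\Phi)$.
   Context: A (right) nearring $(N,+,* )$ is a set with a group $(N,+)$ (identity $0$, not necessarily abelian), a semigroup $(N,* )$, and right distributivity $(a+b)*c=a*c+b*c$ for all $a,b,c$. $N$ is planar if the relation $a\cong b$ ($x*a=x*b$ for all $x$) has at least $3$ classes and for all $a,b,c$ with $a\not\cong b$ the equation $x*a=x*b+c$ has a unique solution. Every planar nearring arises as follows, and we always consider it so presented. $\Phi\le \mathrm{Aut}(N,+)$ acts on the right, is fixed point free (for $\phi\ne\mathrm{id}$, $n\phi=n$ iff $n=0$), and $n\mapsto -n+n\phi$ is bijective for each $\phi\ne\mathrm{id}$. $R$ is a set of representatives of the $\Phi$-orbits of $N\setminus\{0\}$ and $M\subseteq R$. Each $a\ne0$ is uniquely $a=r_a\phi_a$ with $r_a\in R$, $\phi_a\in\Phi$. Multiplication: $a*b=0$ if $b=0$ or $r_b\in M$, else $a*b=a\phi_b$ (and $0*b=0$). The zero multipliers are the elements of $M\Phi\cup\{0\}$, i.e. those $n$ with $x*n=0$ for all $x$. $D(N)=\{n: n*(a+b)=n*a+n*b\ \forall a,b\}$. $Z(\Phi)$ is the centre of $\Phi$. *)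

theory Defs
  imports Main
begin

text \<open>The additive group (N,+) is the whole type 'a (class group_add, not necessarily
abelian). Automorphisms act on the right: n\<phi> is written \<phi> n.\<close>

definition is_aut :: "('a::group_add \<Rightarrow> 'a) \<Rightarrow> bool" where
  "is_aut f \<longleftrightarrow> bij f \<and> (\<forall>a b. f (a + b) = f a + f b)"

definition aut_subgroup :: "('a::group_add \<Rightarrow> 'a) set \<Rightarrow> bool" where
  "aut_subgroup Phi \<longleftrightarrow> (\<forall>f\<in>Phi. is_aut f) \<and> id \<in> Phi \<and>
     (\<forall>f\<in>Phi. \<forall>g\<in>Phi. f \<circ> g \<in> Phi) \<and> (\<forall>f\<in>Phi. inv f \<in> Phi)"

definition is_subgroup_of :: "('a \<Rightarrow> 'a) set \<Rightarrow> ('a \<Rightarrow> 'a) set \<Rightarrow> bool" where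
  "is_subgroup_of S Phi \<longleftrightarrow> S \<subseteq> Phi \<and> id \<in> S \<and>
     (\<forall>f\<in>S. \<forall>g\<in>S. f \<circ> g \<in> S) \<and> (\<forall>f\<in>S. inv f \<in> S)"

definition centre :: "('a \<Rightarrow> 'a) set \<Rightarrow> ('a \<Rightarrow> 'a) set" where
  "centre Phi = {f\<in>Phi. \<forall>g\<in>Phi. f \<circ> g = g \<circ> f}"

definition ferrero_data :: "('a::group_add \<Rightarrow> 'a) set \<Rightarrow> 'a set \<Rightarrow> 'a set \<Rightarrow> bool" where
  "ferrero_data Phi R M \<longleftrightarrow>
     aut_subgroup Phi \<and>
     (\<forall>f\<in>Phi. f \<noteq> id \<longrightarrow> (\<forall>n. f n = n \<longleftrightarrow> n = 0)) \<and>
     (\<forall>f\<in>Phi. f \<noteq> id \<longrightarrow> bij (\<lambda>n. - n + f n)) \<and>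
     R \<subseteq> - {0} \<and>
     (\<forall>a. a \<noteq> 0 \<longrightarrow> (\<exists>!r. r \<in> R \<and> (\<exists>f\<in>Phi. a = f r))) \<and>
     M \<subseteq> R"

text \<open>r_a and \<phi>_a for a \<noteq> 0 with a = r_a \<phi>_a.\<close>
definition rep :: "('a \<Rightarrow> 'a) set \<Rightarrow> 'a set \<Rightarrow> 'a \<Rightarrow> 'a" where
  "rep Phi R a = (THE r. r \<in> R \<and> (\<exists>f\<in>Phi. a = f r))"

definition phi_of :: "('a \<Rightarrow> 'a) set \<Rightarrow> 'a set \<Rightarrow> 'a \<Rightarrow> ('a \<Rightarrow> 'a)" where
  "phi_of Phi R a = (THE f. f \<in> Phi \<and> a = f (rep Phi R a))"

definition pmult :: "('a::group_add \<Rightarrow> 'a) set \<Rightarrow> 'a set \<Rightarrow> 'a set \<Rightarrow> 'a \<Rightarrow> 'a \<Rightarrow> 'a" where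
  "pmult Phi R M a b =
     (if a = 0 \<or> b = 0 \<or> rep Phi R b \<in> M then 0 else phi_of Phi R b a)"

definition is_nearring_mult :: "('a::group_add \<Rightarrow> 'a \<Rightarrow> 'a) \<Rightarrow> bool" where
  "is_nearring_mult m \<longleftrightarrow> (\<forall>a b c. m (m a b) c = m a (m b c)) \<and>
     (\<forall>a b c. m (a + b) c = m a c + m b c)"

definition mcong :: "('a \<Rightarrow> 'a \<Rightarrow> 'a) \<Rightarrow> 'a \<Rightarrow> 'a \<Rightarrow> bool" where
  "mcong m a b \<longleftrightarrow> (\<forall>x. m x a = m x b)"

definition is_planar :: "('a::group_add \<Rightarrow> 'a \<Rightarrow> 'a) \<Rightarrow> bool" where
  "is_planar m \<longleftrightarrow> is_nearring_mult m \<and>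
     (\<exists>a b c. \<not> mcong m a b \<and> \<not> mcong m a c \<and> \<not> mcong m b c) \<and>
     (\<forall>a b c. \<not> mcong m a b \<longrightarrow> (\<exists>!x. m x a = m x b + c))"

definition distrib_elems :: "('a::group_add \<Rightarrow> 'a \<Rightarrow> 'a) \<Rightarrow> 'a set" where
  "distrib_elems m = {n. \<forall>a b. m n (a + b) = m n a + m n b}"

definition zero_multiplier :: "('a::group_add \<Rightarrow> 'a \<Rightarrow> 'a) \<Rightarrow> 'a \<Rightarrow> bool" where
  "zero_multiplier m n \<longleftrightarrow> (\<forall>x. m x n = 0)"

end

theory Submission
  imports Defs
begin

text \<open>Write \<open>x * y\<close> for the planar product and \<open>D\<close> for the distributive elements, \<open>r = r\<^sub>d\<close>.
  For \<open>r \<notin> M\<close> and \<open>f, g \<in> \<Phi>\<close> we have \<open>(r g) * (r f) = r (g f)\<close>, so \<open>\<phi> \<mapsto> r \<phi>\<close> turns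
  composition in \<open>\<Phi>\<close> into multiplication in \<open>N\<close>. In any nearring \<open>D\<close> is closed under
  multiplication, which gives closure under composition. Conversely, left multiplication by an
  element of \<open>r\<Phi>\<close> is injective on \<open>{0} \<union> r\<Phi>\<close>, which contains all products \<open>z * a\<close> for
  \<open>z \<in> r\<Phi>\<close>; hence \<open>y \<in> D\<close> and \<open>y * z \<in> D\<close> force \<open>z \<in> D\<close>. Applied to \<open>d * r = d\<close> this gives
  \<open>r \<in> D\<close>, and applied to \<open>(r f) * (r f\<inverse>) = r\<close> it gives closure under inverses. Finally a central
  \<open>c\<close> commutes with every \<open>\<phi>\<^sub>x\<close>, so \<open>(r c) * x = c (r * x)\<close> and \<open>r c\<close> inherits distributivity
  from \<open>r\<close>.\<close>

lemma distrib_elems_mult_closed: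
  assumes "is_nearring_mult m" and "x \<in> distrib_elems m" and "y \<in> distrib_elems m"
  shows "m x y \<in> distrib_elems m"
proof -
  have assoc: "m (m x y) c = m x (m y c)" for c
    using assms(1) unfolding is_nearring_mult_def by blast
  show ?thesis
    using assms(2,3) unfolding distrib_elems_def by (simp add: assoc)
qed

lemma is_aut_zero: "is_aut f \<Longrightarrow> f 0 = 0"
  unfolding is_aut_def by (metis add.right_neutral add_left_cancel)

lemma is_aut_eq_zero_iff: "is_aut f \<Longrightarrow> f x = 0 \<longleftrightarrow> x = 0"
  by (metis bij_is_inj injD is_aut_def is_aut_zero)

definition orbit :: "('a \<Rightarrow> 'a) set \<Rightarrow> 'a \<Rightarrow> 'a set" where
  "orbit Phi r = (\<lambda>f. f r) ` Phi"

locale ferrero_pair =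
  fixes Phi :: "('a::group_add \<Rightarrow> 'a) set" and R M :: "'a set"
  assumes ferrero: "ferrero_data Phi R M"
begin

abbreviation mult :: "'a \<Rightarrow> 'a \<Rightarrow> 'a" where
  "mult \<equiv> pmult Phi R M"

lemma aut_subgroup: "aut_subgroup Phi"
  using ferrero by (simp add: ferrero_data_def)

lemma is_aut: "f \<in> Phi \<Longrightarrow> is_aut f"
  using aut_subgroup by (simp add: aut_subgroup_def)

lemma id_mem: "id \<in> Phi"
  using aut_subgroup by (simp add: aut_subgroup_def)

lemma comp_mem: "f \<in> Phi \<Longrightarrow> g \<in> Phi \<Longrightarrow> f \<circ> g \<in> Phi"
  using aut_subgroup by (simp add: aut_subgroup_def)

lemma inv_mem: "f \<in> Phi \<Longrightarrow> inv f \<in> Phi"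
  using aut_subgroup by (simp add: aut_subgroup_def)

lemma inv_apply: "f \<in> Phi \<Longrightarrow> inv f (f x) = x"
  using is_aut by (simp add: is_aut_def bij_is_inj)

lemma apply_inv: "f \<in> Phi \<Longrightarrow> f (inv f x) = x"
  using is_aut by (simp add: is_aut_def bij_is_surj surj_f_inv_f)

lemma rep_set_nonzero: "r \<in> R \<Longrightarrow> r \<noteq> 0"
  using ferrero by (auto simp: ferrero_data_def)

lemma fixed_point_free: "f \<in> Phi \<Longrightarrow> f x = x \<Longrightarrow> x \<noteq> 0 \<Longrightarrow> f = id"
  using ferrero unfolding ferrero_data_def by metis

lemma eq_if_agree_nonzero:
  assumes f: "f \<in> Phi" and g: "g \<in> Phi" and "x \<noteq> 0" and "f x = g x"
  shows "f = g"
proof -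
  have "inv g \<circ> f = id"
    using fixed_point_free[OF comp_mem[OF inv_mem[OF g] f]] assms(3,4) inv_apply[OF g] by (metis comp_apply)
  then have "f y = g y" for y
    using apply_inv[OF g, of "f y"] by (simp add: fun_eq_iff)
  then show ?thesis by blast
qed

lemma rep_orbit_unique: "a \<noteq> 0 \<Longrightarrow> \<exists>!r. r \<in> R \<and> (\<exists>f\<in>Phi. a = f r)"
  using ferrero unfolding ferrero_data_def by blast

lemma rep_phi_of_apply:
  assumes r: "r \<in> R" and g: "g \<in> Phi"
  shows "rep Phi R (g r) = r" and "phi_of Phi R (g r) = g"
proof -
  have "g r \<noteq> 0" using rep_set_nonzero[OF r] is_aut_eq_zero_iff[OF is_aut[OF g]] by simp
  show rep: "rep Phi R (g r) = r"
    unfolding rep_def by (rule the1_equality[OF rep_orbit_unique[OF \<open>g r \<noteq> 0\<close>]]) (use r g in blast)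
  show "phi_of Phi R (g r) = g"
    unfolding phi_of_def rep
  proof (rule the_equality)
    show "g \<in> Phi \<and> g r = g r" using g by simp
  next
    fix f assume "f \<in> Phi \<and> g r = f r"
    then show "f = g" using eq_if_agree_nonzero[OF _ g rep_set_nonzero[OF r]] by metis
  qed
qed

lemma rep_phi_of:
  assumes "b \<noteq> 0"
  shows "rep Phi R b \<in> R" and "phi_of Phi R b \<in> Phi" and "phi_of Phi R b (rep Phi R b) = b"
proof -
  obtain r f where "r \<in> R" "f \<in> Phi" "b = f r"
    using rep_orbit_unique[OF assms] by blast
  then show "rep Phi R b \<in> R" and "phi_of Phi R b \<in> Phi" and "phi_of Phi R b (rep Phi R b) = b"
    using rep_phi_of_apply by simp_all
qed

lemma mult_eq: "mult x b = (if b = 0 \<or> rep Phi R b \<in> M then 0 else phi_of Phi R b x)"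
  unfolding pmult_def using is_aut_zero[OF is_aut[OF rep_phi_of(2)]] by auto

lemma mult_orbit:
  assumes "r \<in> R" "r \<notin> M" "g \<in> Phi"
  shows "mult x (g r) = g x"
  using assms rep_phi_of_apply[OF assms(1,3)] rep_set_nonzero[OF assms(1)]
    is_aut_eq_zero_iff[OF is_aut[OF assms(3)]]
  by (simp add: mult_eq)

lemma range_mult_orbit:
  assumes r: "r \<in> R" "r \<notin> M" and y: "y \<in> orbit Phi r"
  shows "range (mult y) = insert 0 (orbit Phi r)"
proof -
  obtain f where f: "f \<in> Phi" "y = f r" using y unfolding orbit_def by blast
  have "mult y b \<in> insert 0 (orbit Phi r)" for b
  proof (cases "b = 0 \<or> rep Phi R b \<in> M")
    case False
    then have "mult y b = (phi_of Phi R b \<circ> f) r" by (simp add: mult_eq f(2))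
    then show ?thesis
      using comp_mem[OF rep_phi_of(2) f(1)] False unfolding orbit_def by blast
  qed (auto simp: mult_eq)
  moreover have "0 \<in> range (mult y)"
    by (metis pmult_def rangeI)
  moreover have "h r \<in> range (mult y)" if "h \<in> Phi" for h
  proof -
    have "mult y ((h \<circ> inv f) r) = h r"
      using mult_orbit[OF r comp_mem[OF that inv_mem[OF f(1)]]] f inv_apply by simp
    then show ?thesis by (metis rangeI)
  qed
  ultimately show ?thesis unfolding orbit_def by blast
qed

lemma mult_orbit_inj_on:
  assumes r: "r \<in> R" "r \<notin> M" and y: "y \<in> orbit Phi r"
  shows "inj_on (mult y) (insert 0 (orbit Phi r))"
proof -
  have "y \<noteq> 0"
    using y rep_set_nonzero[OF r(1)] is_aut_eq_zero_iff[OF is_aut] by (auto simp: orbit_def)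
  have left: "mult y (h r) = h y" if "h \<in> Phi" for h
    using mult_orbit[OF r that] .
  have nonzero: "mult y (h r) \<noteq> 0" if "h \<in> Phi" for h
    using left[OF that] is_aut_eq_zero_iff[OF is_aut[OF that]] \<open>y \<noteq> 0\<close> by simp
  have zero: "mult y 0 = 0" by (simp add: pmult_def)
  show ?thesis
  proof (rule inj_onI)
    fix u v assume u: "u \<in> insert 0 (orbit Phi r)" and v: "v \<in> insert 0 (orbit Phi r)"
      and eq: "mult y u = mult y v"
    show "u = v"
    proof (cases "u = 0 \<or> v = 0")
      case True
      then show ?thesis using u v eq zero nonzero unfolding orbit_def by auto
    next
      case False
      then obtain h h' where "h \<in> Phi" "h' \<in> Phi" "u = h r" "v = h' r"
        using u v unfolding orbit_def by auto
      moreover have "h y = h' y" using eq left calculation by simp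
      ultimately show ?thesis using eq_if_agree_nonzero[OF _ _ \<open>y \<noteq> 0\<close>] by metis
    qed
  qed
qed

lemma distrib_elems_cancel:
  assumes assoc: "is_nearring_mult mult"
    and r: "r \<in> R" "r \<notin> M" and y: "y \<in> orbit Phi r" and z: "z \<in> orbit Phi r"
    and yD: "y \<in> distrib_elems mult" and yzD: "mult y z \<in> distrib_elems mult"
  shows "z \<in> distrib_elems mult"
  unfolding distrib_elems_def
proof (intro CollectI allI)
  fix a b
  let ?H = "insert 0 (orbit Phi r)"
  have range_eq: "range (mult z) = range (mult y)"
    using range_mult_orbit[OF r y] range_mult_orbit[OF r z] by simp
  have add_y: "mult y (u + v) = mult y u + mult y v" for u v
    using yD unfolding distrib_elems_def by blast
  have in_H: "mult z c \<in> ?H" for c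
    using range_mult_orbit[OF r z] by blast
  have "mult z a + mult z b \<in> range (mult y)"
    using range_eq add_y by (metis (no_types, lifting) rangeE rangeI)
  then have sum_H: "mult z a + mult z b \<in> ?H"
    using range_mult_orbit[OF r y] by simp
  have assoc_yz: "mult (mult y z) c = mult y (mult z c)" for c
    using assoc unfolding is_nearring_mult_def by blast
  have "mult y (mult z (a + b)) = mult y (mult z a + mult z b)"
    using yzD unfolding distrib_elems_def by (simp add: assoc_yz[symmetric] add_y)
  then show "mult z (a + b) = mult z a + mult z b"
    using mult_orbit_inj_on[OF r y] in_H sum_H by (meson inj_onD)
qed

lemma mult_central:
  assumes "c \<in> centre Phi"
  shows "mult (c a) x = c (mult a x)"
proof -
  have c: "c \<in> Phi" "\<And>g. g \<in> Phi \<Longrightarrow> c \<circ> g = g \<circ> c"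
    using assms unfolding centre_def by auto
  show ?thesis
    using is_aut_zero[OF is_aut[OF c(1)]] c(2)[OF rep_phi_of(2)]
    by (auto simp: mult_eq fun_eq_iff)
qed

end

theorem mainTheorem2:
  fixes Phi :: "('a::group_add \<Rightarrow> 'a) set" and R M :: "'a set" and d :: 'a
  assumes "ferrero_data Phi R M"
    and "is_planar (pmult Phi R M)"
    and "d \<in> distrib_elems (pmult Phi R M)"
    and "d \<noteq> 0"
    and "\<not> zero_multiplier (pmult Phi R M) d"
  shows "is_subgroup_of {f \<in> Phi. f (rep Phi R d) \<in> distrib_elems (pmult Phi R M)} Phi
         \<and> centre Phi \<subseteq> {f \<in> Phi. f (rep Phi R d) \<in> distrib_elems (pmult Phi R M)}"
proof -
  interpret ferrero_pair Phi R M by (rule ferrero_pair.intro) fact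
  let ?D = "distrib_elems mult"
  define r where "r = rep Phi R d"
  have r: "r \<in> R" "r \<notin> M" and d: "phi_of Phi R d r = d" "phi_of Phi R d \<in> Phi"
    using rep_phi_of[OF assms(4)] assms(5) by (auto simp: r_def zero_multiplier_def pmult_def)
  have nearring: "is_nearring_mult mult"
    using assms(2) by (simp add: is_planar_def)
  have orbit: "f r \<in> orbit Phi r" if "f \<in> Phi" for f
    using that by (simp add: orbit_def)
  have prod: "mult (g r) (f r) = (f \<circ> g) r" if "f \<in> Phi" "g \<in> Phi" for f g
    using mult_orbit[OF r that(1)] by simp
  have "r \<in> ?D"
    using distrib_elems_cancel[OF nearring r orbit[OF d(2)] orbit[OF id_mem]] d assms(3)
      mult_orbit[OF r id_mem] by simp
  moreover have "(f \<circ> g) r \<in> ?D" if "f \<in> Phi" "g \<in> Phi" "f r \<in> ?D" "g r \<in> ?D" for f g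
    using distrib_elems_mult_closed[OF nearring that(4,3)] prod[OF that(1,2)] by simp
  moreover have "inv f r \<in> ?D" if "f \<in> Phi" "f r \<in> ?D" for f
    using distrib_elems_cancel[OF nearring r orbit[OF that(1)] orbit[OF inv_mem[OF that(1)]] that(2)]
      \<open>r \<in> ?D\<close> prod[OF inv_mem that(1)] inv_apply[OF that(1)] by (simp add: that)
  moreover have "c r \<in> ?D" if "c \<in> centre Phi" for c
    using \<open>r \<in> ?D\<close> mult_central[OF that] is_aut[of c] that
    by (simp add: distrib_elems_def centre_def is_aut_def)
  ultimately show ?thesis
    using id_mem comp_mem inv_mem
    by (auto simp: is_subgroup_of_def centre_def r_def[symmetric])
qed

end
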